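(* Let $n\ge 1$, $k\ge 0$, and let $w(u_1,\dots,u_n)$ be a word lying in the commutator subgroup of the free group $\langle u_1,\dots,u_n\rangle$. Let $G$ be any finite group and $C_1,\dots,C_k$ any conjugacy classes of $G$. Then the number of tuples $(u_1,\dots,u_n,z_1,\dots,z_k)$ with $u_i\in G$, $z_i\in C_i$ and $w(u_1,\dots,u_n)\,z_1\cdots z_k=1$ is divisible by $|G|$. *)

theory Defs
  imports "HOL-Algebra.Algebra"
begin

text \<open>Free group on generators 0..<n, as reduced words. A letter (i, b) denotes
  generator u_i if b = False and its inverse if b = True.\<close>

type_synonym letter = "nat \<times> bool"

definition inv_letter :: "letter \<Rightarrow> letter" where
  "inv_letter x = (fst x, \<not> snd x)"

definition fw_cons :: "letter \<Rightarrow> letter list \<Rightarrow> letter list" where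
  "fw_cons x ys = (case ys of [] \<Rightarrow> [x]
     | y # ys' \<Rightarrow> (if y = inv_letter x then ys' else x # ys))"

definition reduce_word :: "letter list \<Rightarrow> letter list" where
  "reduce_word xs = foldr fw_cons xs []"

definition reduced_word :: "letter list \<Rightarrow> bool" where
  "reduced_word xs \<longleftrightarrow> (\<forall>i. Suc i < length xs \<longrightarrow> xs ! Suc i \<noteq> inv_letter (xs ! i))"

definition free_group :: "nat \<Rightarrow> letter list monoid" where
  "free_group n = \<lparr> carrier = {xs. set xs \<subseteq> {..<n} \<times> UNIV \<and> reduced_word xs},
                    monoid.mult = (\<lambda>xs ys. reduce_word (xs @ ys)),
                    monoid.one = [] \<rparr>"

definition eval_word :: "('a, 'b) monoid_scheme \<Rightarrow> (nat \<Rightarrow> 'a) \<Rightarrow> letter list \<Rightarrow> 'a" where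
  "eval_word G u w = foldr (\<lambda>(i, b) acc. (if b then inv\<^bsub>G\<^esub> (u i) else u i) \<otimes>\<^bsub>G\<^esub> acc) w \<one>\<^bsub>G\<^esub>"

definition ordered_prod :: "('a, 'b) monoid_scheme \<Rightarrow> (nat \<Rightarrow> 'a) \<Rightarrow> nat \<Rightarrow> 'a" where
  "ordered_prod G z k = foldr (\<lambda>i acc. z i \<otimes>\<^bsub>G\<^esub> acc) [0..<k] \<one>\<^bsub>G\<^esub>"

definition conj_class :: "('a, 'b) monoid_scheme \<Rightarrow> 'a \<Rightarrow> 'a set" where
  "conj_class G g = {h \<otimes>\<^bsub>G\<^esub> g \<otimes>\<^bsub>G\<^esub> inv\<^bsub>G\<^esub> h | h. h \<in> carrier G}"

end

theory Submission
  imports Defs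
begin

(*
  Put c = u_0.  Since w has exponent sum 0 in u_0, Reidemeister-Schreier rewriting expresses
  w(u) as a word in the conjugates  x_{a,j} = c^a u_j c^-a  (a in Z/e, j <> 0).  The families
  x = (x_{a,j}) arising from a fixed c are exactly the families with  c x c^-1 = shift x,
  where G acts on families by simultaneous conjugation and shift sends level a to a + 1.
  Hence solutions correspond bijectively to pairs (c, x) with  c.x = shift x  and x in a
  conjugation-invariant set.  For any action commuting with a map sigma, the pairs (g, x)
  with g.x = sigma x contribute, orbit by orbit, either 0 or |G|; so their number is a
  multiple of |G|.
*)

lemma group_actionI:
  fixes G (structure)
  assumes "group G"
    and closed: "\<And>c x. c \<in> carrier G \<Longrightarrow> x \<in> E \<Longrightarrow> act c x \<in> E"
    and one: "\<And>x. x \<in> E \<Longrightarrow> act \<one> x = x"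
    and mult: "\<And>c d x. c \<in> carrier G \<Longrightarrow> d \<in> carrier G \<Longrightarrow> x \<in> E \<Longrightarrow>
                 act (c \<otimes> d) x = act c (act d x)"
  shows "group_action G E (\<lambda>c. \<lambda>x\<in>E. act c x)"
proof -
  interpret group G by fact
  have inv_act: "act (inv c) (act c x) = x" if "c \<in> carrier G" "x \<in> E" for c x
    using mult[of "inv c" c x] one[of x] that by simp
  have bij: "(\<lambda>x\<in>E. act c x) \<in> Bij E" if c: "c \<in> carrier G" for c
  proof -
    have "bij_betw (act c) E E"
      by (rule bij_betwI[where g = "act (inv c)"])
        (use closed c inv_act inv_act[of "inv c"] in auto)
    then show ?thesis by (simp add: Bij_def)
  qed
  have "(\<lambda>c. \<lambda>x\<in>E. act c x) \<in> hom G (BijGroup E)"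
    by (rule homI) (auto simp: BijGroup_def bij compose_def mult closed)
  then show ?thesis
    unfolding group_action_def group_hom_def group_hom_axioms_def
    using group_BijGroup \<open>group G\<close> by blast
qed

definition twisted_fixers :: "('a, 'c) monoid_scheme \<Rightarrow> ('a \<Rightarrow> 'b \<Rightarrow> 'b) \<Rightarrow> ('b \<Rightarrow> 'b) \<Rightarrow> 'b \<Rightarrow> 'a set" where
  "twisted_fixers G \<phi> \<sigma> x = {g \<in> carrier G. \<phi> g x = \<sigma> x}"

context group_action
begin

lemma action_one: "x \<in> E \<Longrightarrow> \<phi> \<one> x = x"
  using id_eq_one by (metis restrict_apply')

lemma action_inv: "g \<in> carrier G \<Longrightarrow> x \<in> E \<Longrightarrow> \<phi> (inv g) (\<phi> g x) = x"
  using composition_rule[of x "inv g" g] group.l_inv[OF group_hom.axioms(1)[OF group_hom]] action_one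
  by (metis group.inv_closed group_hom group_hom.axioms(1))

(* When nonempty, twisted_fixers G phi sigma x is a left coset of the stabilizer of x. *)
lemma twisted_fixers_card:
  assumes x: "x \<in> E" and g0: "g0 \<in> twisted_fixers G \<phi> \<sigma> x"
  shows "card (twisted_fixers G \<phi> \<sigma> x) = card (stabilizer G \<phi> x)"
proof -
  interpret group G using group_hom group_hom.axioms(1) by blast
  have g0G: "g0 \<in> carrier G" and g0x: "\<phi> g0 x = \<sigma> x"
    using g0 by (auto simp: twisted_fixers_def)
  have "twisted_fixers G \<phi> \<sigma> x = (\<lambda>h. g0 \<otimes> h) ` stabilizer G \<phi> x"
  proof (intro equalityI subsetI)
    fix g assume "g \<in> twisted_fixers G \<phi> \<sigma> x"
    then have g: "g \<in> carrier G" "\<phi> g x = \<sigma> x" by (auto simp: twisted_fixers_def)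
    have "\<phi> (inv g0 \<otimes> g) x = \<phi> (inv g0) (\<phi> g0 x)"
      using g g0G g0x x composition_rule by simp
    then have "\<phi> (inv g0 \<otimes> g) x = x"
      using action_inv[OF g0G x] by simp
    then have "inv g0 \<otimes> g \<in> stabilizer G \<phi> x"
      using g g0G by (simp add: stabilizer_def)
    moreover have "g = g0 \<otimes> (inv g0 \<otimes> g)"
      using g g0G by (simp add: m_assoc[symmetric])
    ultimately show "g \<in> (\<lambda>h. g0 \<otimes> h) ` stabilizer G \<phi> x" by blast
  next
    fix g assume "g \<in> (\<lambda>h. g0 \<otimes> h) ` stabilizer G \<phi> x"
    then obtain h where "h \<in> carrier G" "\<phi> h x = x" "g = g0 \<otimes> h"
      by (auto simp: stabilizer_def)
    then show "g \<in> twisted_fixers G \<phi> \<sigma> x"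
      using g0G g0x x composition_rule by (simp add: twisted_fixers_def)
  qed
  moreover have "inj_on (\<lambda>h. g0 \<otimes> h) (stabilizer G \<phi> x)"
    using g0G by (auto simp: inj_on_def stabilizer_def)
  ultimately show ?thesis by (simp add: card_image)
qed

(* If sigma commutes with the action, conjugating a twisted fixer of x by h gives one of h.x,
   so nonemptiness of twisted_fixers is constant along orbits. *)
lemma twisted_fixers_conj:
  assumes comm: "\<And>g x. g \<in> carrier G \<Longrightarrow> x \<in> E \<Longrightarrow> \<phi> g (\<sigma> x) = \<sigma> (\<phi> g x)"
    and x: "x \<in> E" and h: "h \<in> carrier G" and g: "g \<in> twisted_fixers G \<phi> \<sigma> x"
  shows "h \<otimes> g \<otimes> inv h \<in> twisted_fixers G \<phi> \<sigma> (\<phi> h x)"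
proof -
  interpret group G using group_hom group_hom.axioms(1) by blast
  have gG: "g \<in> carrier G" and gx: "\<phi> g x = \<sigma> x"
    using g by (auto simp: twisted_fixers_def)
  have hx: "\<phi> h x \<in> E" using element_image h x by blast
  have "\<phi> (h \<otimes> g \<otimes> inv h) (\<phi> h x) = \<phi> (h \<otimes> g) (\<phi> (inv h) (\<phi> h x))"
    using gG h hx by (simp add: composition_rule)
  also have "\<dots> = \<phi> h (\<phi> g x)"
    using action_inv[OF h x] gG h x by (simp add: composition_rule)
  also have "\<dots> = \<sigma> (\<phi> h x)"
    using gx comm[OF h x] by simp
  finally show ?thesis using gG h by (simp add: twisted_fixers_def)
qed

(* On a single orbit the twisted fixers contribute either nothing or, via the
   orbit-stabiliser theorem, exactly |G|. *)
lemma twisted_orbit_sum_dvd: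
  assumes fin: "finite (carrier G)"
    and comm: "\<And>g x. g \<in> carrier G \<Longrightarrow> x \<in> E \<Longrightarrow> \<phi> g (\<sigma> x) = \<sigma> (\<phi> g x)"
    and D: "\<And>g x. g \<in> carrier G \<Longrightarrow> x \<in> D \<Longrightarrow> \<phi> g x \<in> D"
    and orb: "orb \<in> orbits G E \<phi>"
  shows "order G dvd (\<Sum>y\<in>orb. if y \<in> D \<and> twisted_fixers G \<phi> \<sigma> y \<noteq> {}
                                 then card (stabilizer G \<phi> y) else 0)"
proof -
  interpret group G using group_hom group_hom.axioms(1) by blast
  define F where "F = twisted_fixers G \<phi> \<sigma>"
  obtain x where x: "x \<in> E" and orb_x: "orb = orbit G \<phi> x"
    using orb by (auto simp: orbits_def)
  have in_orb: "\<exists>h\<in>carrier G. y = \<phi> h x \<and> y \<in> E" if "y \<in> orb" for y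
    using that x element_image by (auto simp: orb_x orbit_def)
  show ?thesis
  proof (cases "x \<in> D \<and> F x \<noteq> {}")
    case True
    have "y \<in> D \<and> F y \<noteq> {}" if "y \<in> orb" for y
    proof -
      obtain h where h: "h \<in> carrier G" and yh: "y = \<phi> h x" using in_orb[OF \<open>y \<in> orb\<close>] by blast
      obtain g where "g \<in> F x" using True by blast
      then have "h \<otimes> g \<otimes> inv h \<in> F y" using twisted_fixers_conj[OF comm x h] yh by (simp add: F_def)
      then show ?thesis using D[OF h] True yh by blast
    qed
    then show ?thesis using card_stablizer_sum[OF fin orb] by (simp add: F_def)
  next
    case False
    have "\<not> (y \<in> D \<and> F y \<noteq> {})" if "y \<in> orb" for y
    proof
      assume y: "y \<in> D \<and> F y \<noteq> {}"
      obtain h where h: "h \<in> carrier G" and yh: "y = \<phi> h x" and yE: "y \<in> E"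
        using in_orb[OF \<open>y \<in> orb\<close>] by blast
      have x_back: "x = \<phi> (inv h) y" using action_inv[OF h x] yh by simp
      have "x \<in> D \<and> F x \<noteq> {}"
        using D[OF inv_closed[OF h]] twisted_fixers_conj[OF comm yE inv_closed[OF h]] y x_back
        by (auto simp: F_def)
      then show False using False by blast
    qed
    then have "(\<Sum>y\<in>orb. if y \<in> D \<and> F y \<noteq> {} then card (stabilizer G \<phi> y) else 0) = 0"
      by (intro sum.neutral) auto
    then show ?thesis by (simp add: F_def)
  qed
qed

lemma twisted_count_dvd:
  assumes fin: "finite (carrier G)" "finite E"
    and comm: "\<And>g x. g \<in> carrier G \<Longrightarrow> x \<in> E \<Longrightarrow> \<phi> g (\<sigma> x) = \<sigma> (\<phi> g x)"
    and D: "D \<subseteq> E" "\<And>g x. g \<in> carrier G \<Longrightarrow> x \<in> D \<Longrightarrow> \<phi> g x \<in> D"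
  shows "order G dvd card {(g, x). g \<in> carrier G \<and> x \<in> D \<and> \<phi> g x = \<sigma> x}"
proof -
  define F where "F = twisted_fixers G \<phi> \<sigma>"
  define f where "f x = (if x \<in> D \<and> F x \<noteq> {} then card (stabilizer G \<phi> x) else 0)" for x
  have pairs: "{(g, x). g \<in> carrier G \<and> x \<in> D \<and> \<phi> g x = \<sigma> x} = (SIGMA x:D. F x)\<inverse>"
    by (auto simp: F_def twisted_fixers_def)
  have "card {(g, x). g \<in> carrier G \<and> x \<in> D \<and> \<phi> g x = \<sigma> x} = card (SIGMA x:D. F x)"
    unfolding pairs by (rule card_inverse)
  also have "\<dots> = (\<Sum>x\<in>D. card (F x))"
  proof (rule card_SigmaI)
    show "finite D" using D(1) fin(2) by (rule finite_subset)
    show "\<forall>x\<in>D. finite (F x)" using fin(1) by (simp add: F_def twisted_fixers_def)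
  qed
  also have "\<dots> = (\<Sum>x\<in>D. f x)"
    using twisted_fixers_card D(1) by (intro sum.cong) (auto simp: f_def F_def)
  also have "\<dots> = (\<Sum>x\<in>E. f x)"
    by (rule sum.mono_neutral_left) (use fin(2) D(1) in \<open>auto simp: f_def\<close>)
  also have "\<dots> = (\<Sum>orb\<in>orbits G E \<phi>. \<Sum>y\<in>orb. f y)"
    by (rule disjoint_sum[OF fin(2), symmetric])
  finally show ?thesis
    using twisted_orbit_sum_dvd[OF fin(1) comm D(2)] by (simp add: dvd_sum f_def F_def)
qed

end

definition family_conj :: "('a, 'b) monoid_scheme \<Rightarrow> nat \<Rightarrow> 'j set \<Rightarrow> 'a \<Rightarrow> (nat \<Rightarrow> 'j \<Rightarrow> 'a) \<Rightarrow> nat \<Rightarrow> 'j \<Rightarrow> 'a" where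
  "family_conj G e J c x = (\<lambda>a\<in>{..<e}. \<lambda>j\<in>J. c \<otimes>\<^bsub>G\<^esub> x a j \<otimes>\<^bsub>G\<^esub> inv\<^bsub>G\<^esub> c)"

definition family_shift :: "nat \<Rightarrow> (nat \<Rightarrow> 'j \<Rightarrow> 'a) \<Rightarrow> nat \<Rightarrow> 'j \<Rightarrow> 'a" where
  "family_shift e x = (\<lambda>a\<in>{..<e}. x (Suc a mod e))"

definition conj_powers :: "('a, 'b) monoid_scheme \<Rightarrow> nat \<Rightarrow> 'j set \<Rightarrow> 'a \<Rightarrow> ('j \<Rightarrow> 'a) \<Rightarrow> nat \<Rightarrow> 'j \<Rightarrow> 'a" where
  "conj_powers G e J c y = (\<lambda>a\<in>{..<e}. \<lambda>j\<in>J. c [^]\<^bsub>G\<^esub> a \<otimes>\<^bsub>G\<^esub> y j \<otimes>\<^bsub>G\<^esub> inv\<^bsub>G\<^esub> (c [^]\<^bsub>G\<^esub> a))"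

lemma family_eqI:
  assumes "x \<in> {..<e} \<rightarrow>\<^sub>E (J \<rightarrow>\<^sub>E A)" "y \<in> {..<e} \<rightarrow>\<^sub>E (J \<rightarrow>\<^sub>E A)"
    and "\<And>a j. a < e \<Longrightarrow> j \<in> J \<Longrightarrow> x a j = y a j"
  shows "x = y"
proof (rule PiE_ext[OF assms(1,2)])
  fix a assume "a \<in> {..<e}"
  then show "x a = y a" using assms by (intro PiE_ext[of _ J "\<lambda>_. A"]) auto
qed

context group
begin

lemma int_pow_mod_period:
  assumes c: "c \<in> carrier G" and ce: "c [^] e = \<one>"
  shows "c [^] (i mod int e) = c [^] (i::int)"
proof -
  have "ord c dvd e" using pow_eq_id[OF c] ce by simp
  moreover have "int e dvd i - i mod int e" by (simp add: minus_mod_eq_mult_div)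
  ultimately have "int (ord c) dvd i - i mod int e" using dvd_trans int_dvd_int_iff by blast
  then show ?thesis using int_pow_eq[OF c] by simp
qed

lemma pow_mod_period:
  assumes "c \<in> carrier G" "c [^] e = \<one>"
  shows "c [^] (m mod e) = c [^] (m::nat)"
  using int_pow_mod_period[OF assms, of "int m"] by (metis int_pow_int of_nat_mod)

lemma family_conj_closed:
  "c \<in> carrier G \<Longrightarrow> x \<in> {..<e} \<rightarrow>\<^sub>E (J \<rightarrow>\<^sub>E carrier G) \<Longrightarrow>
   family_conj G e J c x \<in> {..<e} \<rightarrow>\<^sub>E (J \<rightarrow>\<^sub>E carrier G)"
  by (auto simp: family_conj_def PiE_iff)

lemma family_conj_action:
  "group_action G ({..<e} \<rightarrow>\<^sub>E (J \<rightarrow>\<^sub>E carrier G))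
     (\<lambda>c. \<lambda>x\<in>{..<e} \<rightarrow>\<^sub>E (J \<rightarrow>\<^sub>E carrier G). family_conj G e J c x)"
proof (rule group_actionI)
  show "group G" by (rule is_group)
  fix c d x assume c: "c \<in> carrier G" and d: "d \<in> carrier G" and x: "x \<in> {..<e} \<rightarrow>\<^sub>E (J \<rightarrow>\<^sub>E carrier G)"
  show "family_conj G e J (c \<otimes> d) x = family_conj G e J c (family_conj G e J d x)"
    using c d x by (auto simp: family_conj_def PiE_iff m_assoc inv_mult_group fun_eq_iff)
next
  fix x assume "x \<in> {..<e} \<rightarrow>\<^sub>E (J \<rightarrow>\<^sub>E carrier G)"
  then show "family_conj G e J \<one> x = x"
    by (intro family_eqI[OF family_conj_closed]) (auto simp: family_conj_def PiE_iff)
qed (rule family_conj_closed)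

lemma family_shift_conj:
  assumes "0 < e" "x \<in> {..<e} \<rightarrow>\<^sub>E (J \<rightarrow>\<^sub>E carrier G)"
  shows "family_conj G e J c (family_shift e x) = family_shift e (family_conj G e J c x)"
  using assms by (auto simp: family_conj_def family_shift_def fun_eq_iff)

lemma conj_powers_closed:
  "c \<in> carrier G \<Longrightarrow> y \<in> J \<rightarrow>\<^sub>E carrier G \<Longrightarrow> conj_powers G e J c y \<in> {..<e} \<rightarrow>\<^sub>E (J \<rightarrow>\<^sub>E carrier G)"
  unfolding conj_powers_def by (auto simp: PiE_iff)

(* conj_powers c y satisfies the twisted fixed-point equation c.x = shift x,
   because c^e = 1 closes the cycle of levels. *)
lemma conj_powers_fixed:
  assumes c: "c \<in> carrier G" and ce: "c [^] e = \<one>" and y: "y \<in> J \<rightarrow>\<^sub>E carrier G"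
  shows "family_conj G e J c (conj_powers G e J c y) = family_shift e (conj_powers G e J c y)"
proof -
  have pow_Suc_mod: "c [^] (Suc a mod e) = c \<otimes> c [^] a" for a
    using pow_mod_period[OF c ce, of "Suc a"] c by (metis nat_pow_Suc2)
  show "family_conj G e J c (conj_powers G e J c y) = family_shift e (conj_powers G e J c y)"
    using c y
    by (auto simp: family_conj_def family_shift_def conj_powers_def fun_eq_iff PiE_iff
                   pow_Suc_mod m_assoc inv_mult_group)
qed

lemma conj_powers_zero:
  assumes "0 < e" "y \<in> J \<rightarrow>\<^sub>E carrier G"
  shows "conj_powers G e J c y 0 = y"
proof -
  have "conj_powers G e J c y 0 = (\<lambda>j\<in>J. \<one> \<otimes> y j \<otimes> inv \<one>)"
    using assms(1) unfolding conj_powers_def by simp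
  also have "\<dots> = (\<lambda>j\<in>J. y j)"
    using assms(2) by (intro restrict_ext) (auto simp: PiE_iff)
  finally show ?thesis using assms(2) by simp
qed

lemma twisted_fixed_family:
  assumes c: "c \<in> carrier G" and e: "0 < e" and x: "x \<in> {..<e} \<rightarrow>\<^sub>E (J \<rightarrow>\<^sub>E carrier G)"
    and fixed: "family_conj G e J c x = family_shift e x"
  shows "x = conj_powers G e J c (x 0)"
proof -
  have step: "x (Suc a) j = c \<otimes> x a j \<otimes> inv c" if "Suc a < e" "j \<in> J" for a j
  proof -
    have "family_shift e x a j = family_conj G e J c x a j" using fixed by simp
    then show ?thesis using that unfolding family_conj_def family_shift_def by simp
  qed
  have powers: "x a j = c [^] a \<otimes> x 0 j \<otimes> inv (c [^] a)" if "a < e" "j \<in> J" for a j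
    using that
  proof (induction a)
    case 0
    then have "x 0 j \<in> carrier G" using x by auto
    then show ?case by simp
  next
    case (Suc a)
    have x0: "x 0 j \<in> carrier G" using x e Suc.prems by (auto simp: PiE_iff)
    have c_Suc: "c [^] Suc a = c \<otimes> c [^] a" using c by (metis nat_pow_Suc2)
    have "x (Suc a) j = c \<otimes> (c [^] a \<otimes> x 0 j \<otimes> inv (c [^] a)) \<otimes> inv c"
      using step[OF Suc.prems] Suc.IH Suc.prems by simp
    also have "\<dots> = (c \<otimes> c [^] a) \<otimes> x 0 j \<otimes> inv (c \<otimes> c [^] a)"
      using c x0 by (simp add: m_assoc inv_mult_group)
    finally show ?case unfolding c_Suc .
  qed
  have x0: "x 0 \<in> J \<rightarrow>\<^sub>E carrier G" using x e by auto
  show ?thesis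
  proof (rule family_eqI[OF x conj_powers_closed[OF c x0]])
    fix a j assume a: "a < e" and j: "j \<in> J"
    then have "conj_powers G e J c (x 0) a j = c [^] a \<otimes> x 0 j \<otimes> inv (c [^] a)"
      unfolding conj_powers_def by simp
    then show "x a j = conj_powers G e J c (x 0) a j"
      using powers[OF a j] by simp
  qed
qed

lemma conj_powers_bij:
  assumes e: "0 < e" and ce: "\<And>c. c \<in> carrier G \<Longrightarrow> c [^] e = \<one>"
  shows "bij_betw (\<lambda>(c, y). (c, conj_powers G e J c y))
           {(c, y). c \<in> carrier G \<and> y \<in> J \<rightarrow>\<^sub>E carrier G \<and> P (conj_powers G e J c y)}
           {(c, x). c \<in> carrier G \<and> x \<in> {..<e} \<rightarrow>\<^sub>E (J \<rightarrow>\<^sub>E carrier G) \<and> P x \<and>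
                    family_conj G e J c x = family_shift e x}"
    (is "bij_betw ?f ?S ?T")
proof (rule bij_betwI[where g = "\<lambda>(c, x). (c, x 0)"])
  have to_T: "(c, conj_powers G e J c y) \<in> ?T"
    if c: "c \<in> carrier G" and y: "y \<in> J \<rightarrow>\<^sub>E carrier G" and "P (conj_powers G e J c y)" for c y
    using conj_powers_closed[OF c y] conj_powers_fixed[OF c ce[OF c] y] c that(3) by simp
  then show "?f \<in> ?S \<rightarrow> ?T" by auto
  have from_T: "conj_powers G e J c (x 0) = x \<and> x 0 \<in> J \<rightarrow>\<^sub>E carrier G" if "(c, x) \<in> ?T" for c x
  proof -
    have c: "c \<in> carrier G" and x: "x \<in> {..<e} \<rightarrow>\<^sub>E (J \<rightarrow>\<^sub>E carrier G)"
      and fixed: "family_conj G e J c x = family_shift e x"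
      using that by auto
    have "x 0 \<in> J \<rightarrow>\<^sub>E carrier G" using x e by auto
    with twisted_fixed_family[OF c e x fixed, symmetric] show ?thesis by blast
  qed
  have to_S: "(c, x 0) \<in> ?S" if cx: "(c, x) \<in> ?T" for c x
  proof -
    have "c \<in> carrier G" "P x" using cx by auto
    moreover have "conj_powers G e J c (x 0) = x" "x 0 \<in> J \<rightarrow>\<^sub>E carrier G"
      using from_T[OF cx] by blast+
    ultimately show ?thesis by simp
  qed
  then show "(\<lambda>(c, x). (c, x 0)) \<in> ?T \<rightarrow> ?S" by auto
  show "(\<lambda>(c, x). (c, x 0)) (?f p) = p" if "p \<in> ?S" for p
    using that conj_powers_zero[OF e] by auto
  show "?f ((\<lambda>(c, x). (c, x 0)) q) = q" if "q \<in> ?T" for q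
  proof -
    obtain c x where q: "q = (c, x)" by (cases q)
    then have "conj_powers G e J c (x 0) = x" using from_T that by blast
    then show ?thesis unfolding q by simp
  qed
qed

lemma conj_invariant_count:
  assumes fin: "finite (carrier G)" "finite J"
    and P_inv: "\<And>c x. c \<in> carrier G \<Longrightarrow> x \<in> {..<order G} \<rightarrow>\<^sub>E (J \<rightarrow>\<^sub>E carrier G) \<Longrightarrow>
                  P (family_conj G (order G) J c x) = P x"
  shows "order G dvd card {(c, y). c \<in> carrier G \<and> y \<in> J \<rightarrow>\<^sub>E carrier G \<and>
                                   P (conj_powers G (order G) J c y)}"
proof -
  define e where "e = order G"
  define Fam where "Fam = {..<e} \<rightarrow>\<^sub>E (J \<rightarrow>\<^sub>E carrier G)"
  define \<phi> where "\<phi> = (\<lambda>c. \<lambda>x\<in>Fam. family_conj G e J c x)"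
  have e: "0 < e" using fin(1) by (simp add: e_def order_gt_0_iff_finite)
  interpret A: group_action G Fam \<phi>
    unfolding Fam_def \<phi>_def by (rule family_conj_action)
  have "order G dvd card {(c, x). c \<in> carrier G \<and> x \<in> {x \<in> Fam. P x} \<and> \<phi> c x = family_shift e x}"
  proof (rule A.twisted_count_dvd)
    show "finite Fam" unfolding Fam_def using fin by (intro finite_PiE) auto
    show "\<phi> c (family_shift e x) = family_shift e (\<phi> c x)" if "c \<in> carrier G" "x \<in> Fam" for c x
    proof -
      have "family_shift e x \<in> Fam"
        using that e by (auto simp: Fam_def family_shift_def PiE_iff)
      then show ?thesis
        using that family_shift_conj[OF e] by (simp add: \<phi>_def Fam_def)
    qed
    show "\<phi> c x \<in> {x \<in> Fam. P x}" if "c \<in> carrier G" "x \<in> {x \<in> Fam. P x}" for c x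
      using that family_conj_closed[of c x e J] P_inv by (simp add: \<phi>_def Fam_def e_def)
  qed (use fin in auto)
  moreover have "{(c, x). c \<in> carrier G \<and> x \<in> {x \<in> Fam. P x} \<and> \<phi> c x = family_shift e x}
      = {(c, x). c \<in> carrier G \<and> x \<in> Fam \<and> P x \<and> family_conj G e J c x = family_shift e x}"
    by (auto simp: \<phi>_def)
  moreover have "bij_betw (\<lambda>(c, y). (c, conj_powers G e J c y))
      {(c, y). c \<in> carrier G \<and> y \<in> J \<rightarrow>\<^sub>E carrier G \<and> P (conj_powers G e J c y)}
      {(c, x). c \<in> carrier G \<and> x \<in> Fam \<and> P x \<and> family_conj G e J c x = family_shift e x}"
    unfolding Fam_def using e pow_order_eq_1 by (intro conj_powers_bij) (auto simp: e_def)
  ultimately show ?thesis by (simp add: bij_betw_same_card e_def)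
qed

end

lemma inv_letter_inv_letter [simp]: "inv_letter (inv_letter a) = a"
  by (simp add: inv_letter_def)

lemma reduced_Cons: "reduced_word (a # b # xs) \<longleftrightarrow> b \<noteq> inv_letter a \<and> reduced_word (b # xs)"
  unfolding reduced_word_def by (auto simp: nth_Cons split: nat.splits)

lemma reduced_Nil [simp]: "reduced_word []"
  and reduced_single [simp]: "reduced_word [a]"
  by (auto simp: reduced_word_def)

lemma reduced_tl: "reduced_word (a # xs) \<Longrightarrow> reduced_word xs"
  by (cases xs) (auto simp: reduced_Cons)

lemma reduced_fw_cons: "reduced_word ys \<Longrightarrow> reduced_word (fw_cons a ys)"
  by (cases ys) (auto simp: fw_cons_def reduced_Cons dest: reduced_tl)

lemma reduced_reduce: "reduced_word (reduce_word xs)"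
proof -
  have "reduced_word (foldr fw_cons xs ys)" if "reduced_word ys" for ys
    using that by (induction xs) (auto simp: reduced_fw_cons)
  then show ?thesis by (simp add: reduce_word_def)
qed

lemma reduce_reduced: "reduced_word xs \<Longrightarrow> reduce_word xs = xs"
proof (induction xs)
  case (Cons a xs)
  then have "reduce_word xs = xs" using reduced_tl by blast
  with Cons.prems show ?case
    by (cases xs) (auto simp: reduce_word_def fw_cons_def reduced_Cons)
qed (simp add: reduce_word_def)

lemma fw_cons_cancel: "reduced_word ys \<Longrightarrow> fw_cons (inv_letter a) (fw_cons a ys) = ys"
  by (cases ys rule: remdups_adj.cases) (auto simp: fw_cons_def reduced_Cons)

lemma foldr_fw_cons_cancel:
  "reduced_word ys \<Longrightarrow> foldr fw_cons (rev (map inv_letter xs)) (foldr fw_cons xs ys) = ys"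
proof (induction xs arbitrary: ys)
  case (Cons a xs)
  have "reduced_word (foldr fw_cons xs ys)"
    using Cons.prems reduced_reduce[of "xs @ ys"] reduce_reduced[OF Cons.prems]
    by (simp add: reduce_word_def)
  then show ?case using fw_cons_cancel Cons by simp
qed simp

(* Reducing a prefix first does not change the result of pushing it onto a reduced word;
   this gives associativity of the free group multiplication. *)
lemma foldr_fw_cons_reduce:
  "reduced_word ys \<Longrightarrow> foldr fw_cons (reduce_word xs) ys = foldr fw_cons xs ys"
proof (induction xs)
  case (Cons a xs)
  have r: "reduced_word (foldr fw_cons zs ys)" for zs
    using reduced_reduce[of "zs @ ys"] reduce_reduced[OF Cons.prems] by (simp add: reduce_word_def)
  have "foldr fw_cons (fw_cons a r) ys = fw_cons a (foldr fw_cons r ys)" for r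
  proof (cases r)
    case (Cons y r')
    show ?thesis
    proof (cases "y = inv_letter a")
      case True
      then show ?thesis
        using Cons fw_cons_cancel[OF r[of r'], of "inv_letter a"] by (simp add: fw_cons_def)
    qed (use Cons in \<open>simp add: fw_cons_def\<close>)
  qed (simp add: fw_cons_def)
  then show ?case using Cons by (simp add: reduce_word_def)
qed (simp add: reduce_word_def)

lemma set_reduce: "set (reduce_word xs) \<subseteq> set xs"
proof -
  have "set (foldr fw_cons xs ys) \<subseteq> set xs \<union> set ys" for ys
    by (induction xs) (auto simp: fw_cons_def split: list.splits)
  then show ?thesis using reduce_word_def by fastforce
qed

lemma free_group_carrier: "xs \<in> carrier (free_group n) \<longleftrightarrow> set xs \<subseteq> {..<n} \<times> UNIV \<and> reduced_word xs"
  and free_group_mult: "xs \<otimes>\<^bsub>free_group n\<^esub> ys = reduce_word (xs @ ys)"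
  and free_group_one: "\<one>\<^bsub>free_group n\<^esub> = []"
  by (simp_all add: free_group_def)

lemma reduce_append: "reduce_word (xs @ ys) = foldr fw_cons xs (reduce_word ys)"
  by (simp add: reduce_word_def)

lemma group_free_group: "group (free_group n)"
proof (rule groupI)
  fix x y z
  assume x: "x \<in> carrier (free_group n)" and y: "y \<in> carrier (free_group n)"
    and z: "z \<in> carrier (free_group n)"
  show "x \<otimes>\<^bsub>free_group n\<^esub> y \<in> carrier (free_group n)"
    using x y set_reduce[of "x @ y"] by (auto simp: free_group_carrier free_group_mult reduced_reduce)
  have "reduce_word (reduce_word (x @ y) @ z) = foldr fw_cons (x @ y) (reduce_word z)"
    by (simp only: reduce_append[of "reduce_word (x @ y)"] foldr_fw_cons_reduce reduced_reduce)
  also have "\<dots> = foldr fw_cons x (foldr fw_cons y (reduce_word z))"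
    by simp
  also have "\<dots> = foldr fw_cons x (reduce_word (y @ z))"
    by (simp add: reduce_append)
  also have "\<dots> = reduce_word (x @ reduce_word (y @ z))"
    by (simp only: reduce_append[of x] reduce_reduced[OF reduced_reduce])
  finally show "x \<otimes>\<^bsub>free_group n\<^esub> y \<otimes>\<^bsub>free_group n\<^esub> z
      = x \<otimes>\<^bsub>free_group n\<^esub> (y \<otimes>\<^bsub>free_group n\<^esub> z)"
    by (simp add: free_group_mult)
next
  fix x assume x: "x \<in> carrier (free_group n)"
  then have red: "reduced_word x" by (simp add: free_group_carrier)
  then show "\<one>\<^bsub>free_group n\<^esub> \<otimes>\<^bsub>free_group n\<^esub> x = x"
    by (simp add: free_group_one free_group_mult reduce_reduced)
  define y where "y = reduce_word (rev (map inv_letter x))"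
  have "set (rev (map inv_letter x)) \<subseteq> {..<n} \<times> UNIV"
    using x by (auto simp: free_group_carrier inv_letter_def)
  then have y: "y \<in> carrier (free_group n)"
    using set_reduce[of "rev (map inv_letter x)"]
    by (auto simp: y_def free_group_carrier reduced_reduce)
  have "y \<otimes>\<^bsub>free_group n\<^esub> x = foldr fw_cons y x"
    by (simp add: free_group_mult reduce_append reduce_reduced[OF red])
  also have "\<dots> = foldr fw_cons (rev (map inv_letter x)) x"
    unfolding y_def by (rule foldr_fw_cons_reduce[OF red])
  also have "\<dots> = \<one>\<^bsub>free_group n\<^esub>"
    using foldr_fw_cons_cancel[of "[]" x] reduce_reduced[OF red]
    by (simp add: reduce_word_def free_group_one)
  finally have "y \<otimes>\<^bsub>free_group n\<^esub> x = \<one>\<^bsub>free_group n\<^esub>" .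
  with y show "\<exists>y\<in>carrier (free_group n). y \<otimes>\<^bsub>free_group n\<^esub> x = \<one>\<^bsub>free_group n\<^esub>" by blast
qed (simp_all add: free_group_carrier free_group_one)

definition letter_exp :: "nat \<Rightarrow> letter \<Rightarrow> int" where
  "letter_exp j l = (if fst l = j then (if snd l then -1 else 1) else 0)"

definition exp_sum :: "nat \<Rightarrow> letter list \<Rightarrow> int" where
  "exp_sum j xs = sum_list (map (letter_exp j) xs)"

lemma exp_sum_Nil [simp]: "exp_sum j [] = 0"
  and exp_sum_Cons [simp]: "exp_sum j (l # xs) = letter_exp j l + exp_sum j xs"
  by (simp_all add: exp_sum_def)

lemma exp_sum_reduce: "exp_sum j (reduce_word xs) = exp_sum j xs"
proof -
  have "exp_sum j (foldr fw_cons xs ys) = exp_sum j xs + exp_sum j ys" for ys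
    by (induction xs)
      (auto simp: fw_cons_def letter_exp_def inv_letter_def split: list.splits)
  then show ?thesis by (simp add: reduce_word_def)
qed

lemma exp_sum_hom: "group_hom (free_group n) integer_group (exp_sum j)"
proof -
  have "exp_sum j (xs @ ys) = exp_sum j xs + exp_sum j ys" for xs ys
    by (simp add: exp_sum_def)
  then have "exp_sum j \<in> hom (free_group n) integer_group"
    by (intro homI) (simp_all add: free_group_mult exp_sum_reduce)
  then show ?thesis
    by (simp add: group_hom_def group_hom_axioms_def group_free_group)
qed

lemma exp_sum_derived:
  assumes "w \<in> derived (free_group n) (carrier (free_group n))"
  shows "exp_sum j w = 0"
proof -
  interpret group_hom "free_group n" integer_group "exp_sum j" by (rule exp_sum_hom)
  have "exp_sum j ` derived (free_group n) (carrier (free_group n))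
      = derived integer_group (exp_sum j ` carrier (free_group n))"
    by (simp add: derived_img)
  also have "\<dots> = {0}"
    using comm_group.derived_eq_singleton[OF abelian_integer_group] by simp
  finally show ?thesis using assms by blast
qed

definition letter_val :: "('a, 'b) monoid_scheme \<Rightarrow> (nat \<Rightarrow> 'a) \<Rightarrow> letter \<Rightarrow> 'a" where
  "letter_val G u l = (if snd l then inv\<^bsub>G\<^esub> (u (fst l)) else u (fst l))"

lemma eval_word_Nil [simp]: "eval_word G u [] = \<one>\<^bsub>G\<^esub>"
  and eval_word_Cons [simp]: "eval_word G u (l # w) = letter_val G u l \<otimes>\<^bsub>G\<^esub> eval_word G u w"
  by (simp_all add: eval_word_def letter_val_def split: prod.split)

(* Reidemeister-Schreier rewriting of a word relative to generator 0: reading the word at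
   level a (an integer, taken modulo e), a letter of generator 0 changes the level by its
   exponent, and any other letter u_j^(+-1) becomes x_(a mod e),j^(+-1). *)
fun schreier_word :: "('a, 'b) monoid_scheme \<Rightarrow> nat \<Rightarrow> (nat \<Rightarrow> nat \<Rightarrow> 'a) \<Rightarrow> int \<Rightarrow> letter list \<Rightarrow> 'a" where
  "schreier_word G e x a [] = \<one>\<^bsub>G\<^esub>"
| "schreier_word G e x a (l # w) =
     (if fst l = 0 then schreier_word G e x (a + letter_exp 0 l) w
      else letter_val G (x (nat (a mod int e))) l \<otimes>\<^bsub>G\<^esub> schreier_word G e x a w)"

context group
begin

lemma inv_mult_cancel_left [simp]: "x \<in> carrier G \<Longrightarrow> y \<in> carrier G \<Longrightarrow> inv x \<otimes> (x \<otimes> y) = y"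
  by (simp add: m_assoc[symmetric])

lemma conj_eq_one_iff: "c \<in> carrier G \<Longrightarrow> y \<in> carrier G \<Longrightarrow> c \<otimes> y \<otimes> inv c = \<one> \<longleftrightarrow> y = \<one>"
proof -
  assume c: "c \<in> carrier G" and y: "y \<in> carrier G"
  have "y = inv c \<otimes> (c \<otimes> y \<otimes> inv c) \<otimes> c" using c y by (simp add: m_assoc)
  then show ?thesis using c by auto
qed

lemma letter_val_closed: "u (fst l) \<in> carrier G \<Longrightarrow> letter_val G u l \<in> carrier G"
  by (simp add: letter_val_def)

lemma letter_val_conj:
  assumes "c \<in> carrier G" "u (fst l) \<in> carrier G"
  shows "c \<otimes> letter_val G u l \<otimes> inv c = letter_val G (\<lambda>j. c \<otimes> u j \<otimes> inv c) l"
  using assms by (simp add: letter_val_def inv_mult_group m_assoc)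

lemma eval_word_closed:
  "(\<And>j. j \<in> fst ` set w \<Longrightarrow> u j \<in> carrier G) \<Longrightarrow> eval_word G u w \<in> carrier G"
  by (induction w) (auto simp: letter_val_closed)

lemma schreier_word_closed:
  assumes "0 < e" "\<And>a j. a < e \<Longrightarrow> j \<in> fst ` set w \<Longrightarrow> j \<noteq> 0 \<Longrightarrow> x a j \<in> carrier G"
  shows "schreier_word G e x a w \<in> carrier G"
  using assms(2)
proof (induction w arbitrary: a)
  case (Cons l w)
  have "nat (a mod int e) < e" using assms(1) by (simp add: nat_less_iff)
  then show ?case using Cons by (auto intro!: letter_val_closed)
qed simp

lemma schreier_word_conj:
  assumes e: "0 < e" and c: "c \<in> carrier G"
    and x: "\<And>a j. a < e \<Longrightarrow> j \<in> fst ` set w \<Longrightarrow> j \<noteq> 0 \<Longrightarrow> x a j \<in> carrier G"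
    and x': "\<And>a j. a < e \<Longrightarrow> j \<in> fst ` set w \<Longrightarrow> j \<noteq> 0 \<Longrightarrow> x' a j = c \<otimes> x a j \<otimes> inv c"
  shows "schreier_word G e x' a w = c \<otimes> schreier_word G e x a w \<otimes> inv c"
  using x x'
proof (induction w arbitrary: a)
  case Nil
  then show ?case using c by simp
next
  case (Cons l w)
  have IH: "schreier_word G e x' b w = c \<otimes> schreier_word G e x b w \<otimes> inv c" for b
    using Cons by simp
  have rest: "schreier_word G e x a w \<in> carrier G"
    using schreier_word_closed[OF e] Cons.prems(1) by simp
  show ?case
  proof (cases "fst l = 0")
    case False
    define level where "level = nat (a mod int e)"
    have level: "level < e" using e by (simp add: level_def nat_less_iff)
    have xl: "x level (fst l) \<in> carrier G" using Cons.prems(1)[OF level] False by simp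
    have "letter_val G (x' level) l = letter_val G (\<lambda>j. c \<otimes> x level j \<otimes> inv c) l"
      using Cons.prems(2)[OF level] False by (simp add: letter_val_def)
    also have "\<dots> = c \<otimes> letter_val G (x level) l \<otimes> inv c"
      using letter_val_conj[of c "x level" l, OF c xl] by simp
    finally show ?thesis
      using False IH c rest xl letter_val_closed[of "x level" l, OF xl]
      by (simp add: level_def m_assoc)
  qed (use IH in simp)
qed

lemma eval_word_schreier:
  assumes c: "c \<in> carrier G" and ce: "c [^] e = \<one>" and e: "0 < e"
    and u0: "u 0 = c" and u: "\<And>j. j \<in> fst ` set w \<Longrightarrow> u j \<in> carrier G"
    and x: "\<And>a j. a < e \<Longrightarrow> j \<in> fst ` set w \<Longrightarrow> j \<noteq> 0 \<Longrightarrow>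
              x a j = c [^] a \<otimes> u j \<otimes> inv (c [^] a)"
  shows "c [^] a \<otimes> eval_word G u w = schreier_word G e x a w \<otimes> c [^] (a + exp_sum 0 w)"
  using u x
proof (induction w arbitrary: a)
  case Nil
  then show ?case using c by simp
next
  case (Cons l w)
  have IH: "c [^] b \<otimes> eval_word G u w = schreier_word G e x b w \<otimes> c [^] (b + exp_sum 0 w)" for b
    using Cons by simp
  have ul: "u (fst l) \<in> carrier G" and rest: "eval_word G u w \<in> carrier G"
    using Cons.prems(1) eval_word_closed[of w u] by auto
  show ?case
  proof (cases "fst l = 0")
    case True
    then have "letter_val G u l = c [^] letter_exp 0 l"
      using c u0 by (simp add: letter_val_def letter_exp_def int_pow_neg)
    then have "c [^] a \<otimes> eval_word G u (l # w) = c [^] (a + letter_exp 0 l) \<otimes> eval_word G u w"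
      using c rest by (simp add: m_assoc[symmetric] int_pow_mult)
    then show ?thesis using IH True by (simp add: add.assoc letter_exp_def)
  next
    case False
    define level where "level = nat (a mod int e)"
    have level: "level < e" using e by (simp add: level_def nat_less_iff)
    have "c [^] level = c [^] a"
      using int_pow_mod_period[OF c ce, of a] e by (simp add: level_def flip: int_pow_int)
    then have lv: "letter_val G (x level) l = c [^] a \<otimes> letter_val G u l \<otimes> inv (c [^] a)"
      using Cons.prems(2)[OF level] False letter_val_conj[of "c [^] a" u l, OF _ ul] c
      by (simp add: letter_val_def)
    have "c [^] a \<otimes> eval_word G u (l # w)
        = letter_val G (x level) l \<otimes> (c [^] a \<otimes> eval_word G u w)"
      using lv c ul rest letter_val_closed[of u l, OF ul] by (simp add: m_assoc)
    moreover have "schreier_word G e x a w \<in> carrier G"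
      by (rule schreier_word_closed[OF e]) (use Cons.prems c in auto)
    moreover have "letter_val G (x level) l \<in> carrier G"
      using lv c letter_val_closed[of u l, OF ul] by simp
    ultimately show ?thesis
      using IH False c by (simp add: level_def letter_exp_def m_assoc)
  qed
qed

end

context group
begin

lemma foldr_mult_closed:
  "(\<And>i. i \<in> set xs \<Longrightarrow> z i \<in> carrier G) \<Longrightarrow> foldr (\<lambda>i acc. z i \<otimes> acc) xs \<one> \<in> carrier G"
  by (induction xs) auto

lemma ordered_prod_closed:
  "(\<And>i. i < k \<Longrightarrow> z i \<in> carrier G) \<Longrightarrow> ordered_prod G z k \<in> carrier G"
  unfolding ordered_prod_def by (rule foldr_mult_closed) simp

lemma ordered_prod_cong: "(\<And>i. i < k \<Longrightarrow> z i = z' i) \<Longrightarrow> ordered_prod G z k = ordered_prod G z' k"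
  unfolding ordered_prod_def by (intro foldr_cong) auto

lemma ordered_prod_conj:
  assumes c: "c \<in> carrier G" and z: "\<And>i. i < k \<Longrightarrow> z i \<in> carrier G"
    and z': "\<And>i. i < k \<Longrightarrow> z' i = c \<otimes> z i \<otimes> inv c"
  shows "ordered_prod G z' k = c \<otimes> ordered_prod G z k \<otimes> inv c"
proof -
  have "foldr (\<lambda>i acc. z' i \<otimes> acc) xs \<one> = c \<otimes> foldr (\<lambda>i acc. z i \<otimes> acc) xs \<one> \<otimes> inv c"
    if "set xs \<subseteq> {..<k}" for xs
    using that
  proof (induction xs)
    case (Cons i xs)
    have "foldr (\<lambda>i acc. z i \<otimes> acc) xs \<one> \<in> carrier G"
      using Cons.prems z by (intro foldr_mult_closed) auto
    then show ?case using Cons c z z' by (simp add: m_assoc)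
  qed (use c in simp)
  from this[of "[0..<k]"] show ?thesis by (simp add: ordered_prod_def atLeast0LessThan)
qed

lemma conj_class_closed: "g \<in> carrier G \<Longrightarrow> z \<in> conj_class G g \<Longrightarrow> z \<in> carrier G"
  by (auto simp: conj_class_def)

lemma conj_class_conj:
  assumes c: "c \<in> carrier G" and z: "z \<in> carrier G" and g: "g \<in> carrier G"
  shows "c \<otimes> z \<otimes> inv c \<in> conj_class G g \<longleftrightarrow> z \<in> conj_class G g"
proof
  assume "c \<otimes> z \<otimes> inv c \<in> conj_class G g"
  then obtain h where h: "h \<in> carrier G" and eq: "c \<otimes> z \<otimes> inv c = h \<otimes> g \<otimes> inv h"
    by (auto simp: conj_class_def)
  have "z = inv c \<otimes> (c \<otimes> z \<otimes> inv c) \<otimes> c" using c z by (simp add: m_assoc)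
  also have "\<dots> = (inv c \<otimes> h) \<otimes> g \<otimes> inv (inv c \<otimes> h)"
    unfolding eq using c h g by (simp add: m_assoc inv_mult_group)
  finally show "z \<in> conj_class G g" using c h by (auto simp: conj_class_def)
next
  assume "z \<in> conj_class G g"
  then obtain h where h: "h \<in> carrier G" and eq: "z = h \<otimes> g \<otimes> inv h"
    by (auto simp: conj_class_def)
  have "c \<otimes> z \<otimes> inv c = (c \<otimes> h) \<otimes> g \<otimes> inv (c \<otimes> h)"
    unfolding eq using c h g by (simp add: m_assoc inv_mult_group)
  then show "c \<otimes> z \<otimes> inv c \<in> conj_class G g" using c h by (auto simp: conj_class_def)
qed

end

definition join_vars :: "nat \<Rightarrow> nat \<Rightarrow> (nat \<Rightarrow> 'a) \<Rightarrow> (nat \<Rightarrow> 'a) \<Rightarrow> nat \<Rightarrow> 'a" where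
  "join_vars n k u z = (\<lambda>j\<in>{1..<n + k}. if j < n then u j else z (j - n))"

lemma join_vars_bij:
  assumes "0 < n"
  shows "bij_betw (\<lambda>(u, z). (u 0, join_vars n k u z))
           (({..<n} \<rightarrow>\<^sub>E A) \<times> ({..<k} \<rightarrow>\<^sub>E A)) (A \<times> ({1..<n + k} \<rightarrow>\<^sub>E A))"
proof (rule bij_betwI[where g = "\<lambda>(c, y). ((\<lambda>j\<in>{..<n}. if j = 0 then c else y j), (\<lambda>i\<in>{..<k}. y (n + i)))"])
  show "(\<lambda>(u, z). (u 0, join_vars n k u z)) \<in> ({..<n} \<rightarrow>\<^sub>E A) \<times> ({..<k} \<rightarrow>\<^sub>E A) \<rightarrow> A \<times> ({1..<n + k} \<rightarrow>\<^sub>E A)"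
    using assms by (auto simp: join_vars_def PiE_iff)
  show "(\<lambda>(c, y). ((\<lambda>j\<in>{..<n}. if j = 0 then c else y j), (\<lambda>i\<in>{..<k}. y (n + i))))
      \<in> A \<times> ({1..<n + k} \<rightarrow>\<^sub>E A) \<rightarrow> ({..<n} \<rightarrow>\<^sub>E A) \<times> ({..<k} \<rightarrow>\<^sub>E A)"
    using assms by (auto simp: Pi_iff PiE_def)
  show "(\<lambda>(c, y). ((\<lambda>j\<in>{..<n}. if j = 0 then c else y j), (\<lambda>i\<in>{..<k}. y (n + i))))
      ((\<lambda>(u, z). (u 0, join_vars n k u z)) p) = p"
    if "p \<in> ({..<n} \<rightarrow>\<^sub>E A) \<times> ({..<k} \<rightarrow>\<^sub>E A)" for p
    using that assms by (auto simp: join_vars_def PiE_iff extensional_def fun_eq_iff)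
  show "(\<lambda>(u, z). (u 0, join_vars n k u z))
      ((\<lambda>(c, y). ((\<lambda>j\<in>{..<n}. if j = 0 then c else y j), (\<lambda>i\<in>{..<k}. y (n + i)))) q) = q"
    if "q \<in> A \<times> ({1..<n + k} \<rightarrow>\<^sub>E A)" for q
    using that assms by (auto simp: join_vars_def PiE_iff extensional_def fun_eq_iff)
qed

definition rewritten_equation ::
    "('a, 'b) monoid_scheme \<Rightarrow> nat \<Rightarrow> nat \<Rightarrow> letter list \<Rightarrow> (nat \<Rightarrow> 'a set) \<Rightarrow> (nat \<Rightarrow> nat \<Rightarrow> 'a) \<Rightarrow> bool" where
  "rewritten_equation G n k w C x \<longleftrightarrow> (\<forall>i<k. x 0 (n + i) \<in> C i) \<and>
     schreier_word G (order G) x 0 w \<otimes>\<^bsub>G\<^esub> ordered_prod G (\<lambda>i. x 0 (n + i)) k = \<one>\<^bsub>G\<^esub>"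

context group
begin

lemma rewritten_equation_conj:
  assumes fin: "finite (carrier G)" and n: "0 < n" and w: "set w \<subseteq> {..<n} \<times> UNIV"
    and C: "\<And>i c z. i < k \<Longrightarrow> c \<in> carrier G \<Longrightarrow> z \<in> carrier G \<Longrightarrow> c \<otimes> z \<otimes> inv c \<in> C i \<longleftrightarrow> z \<in> C i"
    and c: "c \<in> carrier G" and x: "x \<in> {..<order G} \<rightarrow>\<^sub>E ({1..<n + k} \<rightarrow>\<^sub>E carrier G)"
  shows "rewritten_equation G n k w C (family_conj G (order G) {1..<n + k} c x) \<longleftrightarrow>
         rewritten_equation G n k w C x"
proof -
  define e where "e = order G"
  define x' where "x' = family_conj G e {1..<n + k} c x"
  have e: "0 < e" using fin by (simp add: e_def order_gt_0_iff_finite)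
  have x_in: "x a j \<in> carrier G" if "a < e" "j \<in> {1..<n + k}" for a j
    using PiE_mem[OF PiE_mem[OF x]] that by (simp add: e_def)
  have x': "x' a j = c \<otimes> x a j \<otimes> inv c" if "a < e" "j \<in> {1..<n + k}" for a j
    using that by (simp add: x'_def family_conj_def)
  have letters: "j \<in> {1..<n + k}" if "j \<in> fst ` set w" "j \<noteq> 0" for j
    using w that by auto
  have tail: "n + i \<in> {1..<n + k}" if "i < k" for i
    using n that by simp
  have Q: "schreier_word G e x' 0 w = c \<otimes> schreier_word G e x 0 w \<otimes> inv c"
    by (rule schreier_word_conj[OF e c]) (use x_in x' letters in auto)
  have O: "ordered_prod G (\<lambda>i. x' 0 (n + i)) k = c \<otimes> ordered_prod G (\<lambda>i. x 0 (n + i)) k \<otimes> inv c"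
    by (rule ordered_prod_conj[OF c]) (use x_in x' tail e in auto)
  have mem: "(\<forall>i<k. x' 0 (n + i) \<in> C i) \<longleftrightarrow> (\<forall>i<k. x 0 (n + i) \<in> C i)"
    using C[OF _ c] x' x_in tail e by simp
  have "schreier_word G e x 0 w \<in> carrier G" "ordered_prod G (\<lambda>i. x 0 (n + i)) k \<in> carrier G"
    using schreier_word_closed[OF e] ordered_prod_closed x_in letters tail e by auto
  then have "schreier_word G e x' 0 w \<otimes> ordered_prod G (\<lambda>i. x' 0 (n + i)) k
      = c \<otimes> (schreier_word G e x 0 w \<otimes> ordered_prod G (\<lambda>i. x 0 (n + i)) k) \<otimes> inv c"
    using Q O c by (simp add: m_assoc)
  then have "rewritten_equation G n k w C x' \<longleftrightarrow> rewritten_equation G n k w C x"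
    unfolding rewritten_equation_def e_def[symmetric]
    using mem conj_eq_one_iff[OF c] \<open>schreier_word G e x 0 w \<in> carrier G\<close>
      \<open>ordered_prod G (\<lambda>i. x 0 (n + i)) k \<in> carrier G\<close> by simp
  then show ?thesis by (simp add: x'_def e_def)
qed

lemma rewritten_equation_conj_powers:
  assumes fin: "finite (carrier G)" and n: "0 < n" and w: "set w \<subseteq> {..<n} \<times> UNIV"
    and exp: "exp_sum 0 w = 0"
    and u: "u \<in> {..<n} \<rightarrow>\<^sub>E carrier G" and z: "z \<in> {..<k} \<rightarrow>\<^sub>E carrier G"
  shows "rewritten_equation G n k w C (conj_powers G (order G) {1..<n + k} (u 0) (join_vars n k u z)) \<longleftrightarrow>
         (\<forall>i<k. z i \<in> C i) \<and> eval_word G u w \<otimes> ordered_prod G z k = \<one>"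
proof -
  define e where "e = order G"
  define y where "y = join_vars n k u z"
  define x where "x = conj_powers G e {1..<n + k} (u 0) y"
  have e: "0 < e" using fin by (simp add: e_def order_gt_0_iff_finite)
  have c: "u 0 \<in> carrier G" using u n by auto
  have y: "y \<in> {1..<n + k} \<rightarrow>\<^sub>E carrier G"
    using u z by (auto simp: y_def join_vars_def Pi_iff PiE_def)
  have x0: "x 0 = y" using conj_powers_zero[OF e y] by (simp add: x_def)
  have tail: "x 0 (n + i) = z i" if "i < k" for i
    using that n by (simp add: x0 y_def join_vars_def)
  have u_in: "u j \<in> carrier G" if "j \<in> fst ` set w" for j
    using u w that by auto
  have "u 0 [^] (0::int) \<otimes> eval_word G u w = schreier_word G e x 0 w \<otimes> u 0 [^] (0 + exp_sum 0 w)"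
  proof (rule eval_word_schreier)
    show "u 0 [^] e = \<one>" using pow_order_eq_1[OF c] by (simp add: e_def)
  next
    fix a j assume "a < e" "j \<in> fst ` set w" "j \<noteq> 0"
    then show "x a j = u 0 [^] a \<otimes> u j \<otimes> inv (u 0 [^] a)"
      using w by (auto simp: x_def y_def conj_powers_def join_vars_def)
  qed (use c e u_in in auto)
  moreover have "schreier_word G e x 0 w \<in> carrier G"
  proof (rule schreier_word_closed[OF e])
    fix a j assume "a < e" "j \<in> fst ` set w" "j \<noteq> 0"
    then show "x a j \<in> carrier G"
      using PiE_mem[OF PiE_mem[OF conj_powers_closed[OF c y]]] w by (auto simp: x_def)
  qed
  ultimately have "eval_word G u w = schreier_word G e x 0 w"
    using exp eval_word_closed[OF u_in] by simp
  moreover have "ordered_prod G (\<lambda>i. x 0 (n + i)) k = ordered_prod G z k"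
    using tail by (rule ordered_prod_cong)
  ultimately show ?thesis
    using tail by (simp add: rewritten_equation_def x_def y_def e_def)
qed

end

context group
begin

lemma solutions_bij:
  assumes fin: "finite (carrier G)" and n: "0 < n" and w: "set w \<subseteq> {..<n} \<times> UNIV"
    and exp: "exp_sum 0 w = 0" and C: "\<And>i. i < k \<Longrightarrow> C i \<subseteq> carrier G"
  shows "bij_betw (\<lambda>(u, z). (u 0, join_vars n k u z))
           {(u, z). u \<in> {..<n} \<rightarrow>\<^sub>E carrier G \<and> z \<in> {..<k} \<rightarrow>\<^sub>E UNIV \<and> (\<forall>i<k. z i \<in> C i) \<and>
                    eval_word G u w \<otimes> ordered_prod G z k = \<one>}
           {(c, y). c \<in> carrier G \<and> y \<in> {1..<n + k} \<rightarrow>\<^sub>E carrier G \<and>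
                    rewritten_equation G n k w C (conj_powers G (order G) {1..<n + k} c y)}"
proof -
  define f where "f = (\<lambda>(u, z). (u 0, join_vars n k u z :: nat \<Rightarrow> 'a))"
  define Q where "Q = (\<lambda>(c, y). rewritten_equation G n k w C (conj_powers G (order G) {1..<n + k} c y))"
  have bij: "bij_betw f {p \<in> ({..<n} \<rightarrow>\<^sub>E carrier G) \<times> ({..<k} \<rightarrow>\<^sub>E carrier G). Q (f p)}
                       {q \<in> carrier G \<times> ({1..<n + k} \<rightarrow>\<^sub>E carrier G). Q q}"
    unfolding f_def by (rule bij_betw_Collect[OF join_vars_bij[OF n]]) simp
  have z_in: "z \<in> {..<k} \<rightarrow>\<^sub>E UNIV \<and> (\<forall>i<k. z i \<in> C i) \<longleftrightarrow>
              z \<in> {..<k} \<rightarrow>\<^sub>E carrier G \<and> (\<forall>i<k. z i \<in> C i)" for z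
    using C by (auto simp: PiE_def Pi_iff)
  have "{(u, z). u \<in> {..<n} \<rightarrow>\<^sub>E carrier G \<and> z \<in> {..<k} \<rightarrow>\<^sub>E UNIV \<and> (\<forall>i<k. z i \<in> C i) \<and>
                 eval_word G u w \<otimes> ordered_prod G z k = \<one>}
      = {p \<in> ({..<n} \<rightarrow>\<^sub>E carrier G) \<times> ({..<k} \<rightarrow>\<^sub>E carrier G). Q (f p)}"
  proof (rule Set.set_eqI)
    fix p :: "(nat \<Rightarrow> 'a) \<times> (nat \<Rightarrow> 'a)"
    obtain u z where p: "p = (u, z)" by (cases p)
    show "p \<in> {(u, z). u \<in> {..<n} \<rightarrow>\<^sub>E carrier G \<and> z \<in> {..<k} \<rightarrow>\<^sub>E UNIV \<and> (\<forall>i<k. z i \<in> C i) \<and>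
                      eval_word G u w \<otimes> ordered_prod G z k = \<one>}
        \<longleftrightarrow> p \<in> {p \<in> ({..<n} \<rightarrow>\<^sub>E carrier G) \<times> ({..<k} \<rightarrow>\<^sub>E carrier G). Q (f p)}"
      unfolding p using z_in[of z] rewritten_equation_conj_powers[where u = u and z = z and C = C, OF fin n w exp]
      by (auto simp: f_def Q_def)
  qed
  moreover have "{q \<in> carrier G \<times> ({1..<n + k} \<rightarrow>\<^sub>E carrier G). Q q}
      = {(c, y). c \<in> carrier G \<and> y \<in> {1..<n + k} \<rightarrow>\<^sub>E carrier G \<and>
                 rewritten_equation G n k w C (conj_powers G (order G) {1..<n + k} c y)}"
    by (auto simp: Q_def)
  ultimately show ?thesis using bij by (simp add: f_def)
qed

end

theorem mainTheorem7:
  fixes G :: "('a, 'b) monoid_scheme" and n k :: nat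
    and w :: "letter list" and g :: "nat \<Rightarrow> 'a" and C :: "nat \<Rightarrow> 'a set"
  assumes "n \<ge> 1"
    and "w \<in> carrier (free_group n)"
    and "w \<in> derived (free_group n) (carrier (free_group n))"
    and "group G" and "finite (carrier G)"
    and "\<And>i. i < k \<Longrightarrow> g i \<in> carrier G \<and> C i = conj_class G (g i)"
  shows "order G dvd card {(u, z). u \<in> ({..<n} \<rightarrow>\<^sub>E carrier G) \<and> z \<in> ({..<k} \<rightarrow>\<^sub>E UNIV) \<and>
            (\<forall>i<k. z i \<in> C i) \<and>
            eval_word G u w \<otimes>\<^bsub>G\<^esub> ordered_prod G z k = \<one>\<^bsub>G\<^esub>}"
proof -
  interpret group G by fact
  have n: "0 < n" using assms(1) by simp
  have letters: "set w \<subseteq> {..<n} \<times> UNIV" using assms(2) by (simp add: free_group_carrier)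
  have exp: "exp_sum 0 w = 0" using assms(3) by (rule exp_sum_derived)
  have C_carrier: "C i \<subseteq> carrier G" if "i < k" for i
    using assms(6)[OF that] conj_class_closed by blast
  have "order G dvd card {(c, y). c \<in> carrier G \<and> y \<in> {1..<n + k} \<rightarrow>\<^sub>E carrier G \<and>
           rewritten_equation G n k w C (conj_powers G (order G) {1..<n + k} c y)}"
  proof (rule conj_invariant_count[OF assms(5)])
    fix c x assume c: "c \<in> carrier G" and x: "x \<in> {..<order G} \<rightarrow>\<^sub>E ({1..<n + k} \<rightarrow>\<^sub>E carrier G)"
    show "rewritten_equation G n k w C (family_conj G (order G) {1..<n + k} c x)
          \<longleftrightarrow> rewritten_equation G n k w C x"
      by (rule rewritten_equation_conj[OF assms(5) n letters _ c x])
        (use assms(6) conj_class_conj in auto)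
  qed simp
  then show ?thesis
    using bij_betw_same_card[OF solutions_bij[OF assms(5) n letters exp C_carrier]] by simp
qed

end
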